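(* Let $(\sigma,\rho)\in GL_n(\mathbb R)\times GL_m(\mathbb R)$ be a $G$-compatible pair, i.e. $\sigma\exp\left(\rho^{(j)}\cdot\Delta\right)\sigma^{-1}\in SL_n(\mathbb Z)$ for all $j=1,\dots,m$, where $\rho^{(j)}$ is the $j$-th column of $\rho$. Then $$L_{(\sigma,\rho)}:=\sigma^{-1}\mathbb Z^n\rtimes_\eta\rho\mathbb Z^m=\{(\sigma^{-1}v,\rho p):\ v\in\mathbb Z^n,\ p\in\mathbb Z^m\}\subset G$$ is a lattice in $G$ (a discrete subgroup with $G/L_{(\sigma,\rho)}$ carrying a finite $G$-invariant measure; in fact it is co-compact).
   Context: Fix integers $1\le m\le n$. Let $\Delta_1,\dots,\Delta_m\in\mathbb R^{n\times n}$ be linearly independent, nonsingular, traceless diagonal matrices $\Delta_i=\mathrm{diag}(d_1^{(i)},\dots,d_n^{(i)})$ such that for each $i$, $d_k^{(i)}\neq d_j^{(i)}$ whenever $k\neq j$. For $t=(t_1,\dots,t_m)^T\in\mathbb R^m$ write $t\cdot\Delta=\sum_{i=1}^m t_i\Delta_i$ and $\eta(t)=e^{t\cdot\Delta}$ (matrix exponential). Let $G=\mathbb R^n\rtimes_\eta\mathbb R^m$ be the Lie group with underlying set $\mathbb R^n\times\mathbb R^m$ and multiplication $(x,t)(y,s)=(x+e^{t\cdot\Delta}y,\ t+s)$; the inverse is $(x,t)^{-1}=(-e^{-t\cdot\Delta}x,-t)$. *)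

theory Defs
  imports "HOL-Analysis.Analysis"
begin

definition is_diag :: "real^'n^'n \<Rightarrow> bool" where
  "is_diag A \<longleftrightarrow> (\<forall>k l. k \<noteq> l \<longrightarrow> A $ k $ l = 0)"

definition tdot :: "('m \<Rightarrow> real^'n^'n) \<Rightarrow> real^'m \<Rightarrow> real^'n^'n" where
  "tdot Delta t = (\<Sum>i\<in>UNIV. (t $ i) *\<^sub>R Delta i)"

text \<open>eta(t) = exp(t . Delta); since t . Delta is diagonal (all Delta_i are diagonal),
  its matrix exponential is the diagonal matrix of the exponentials of the diagonal entries.\<close>
definition eta :: "('m \<Rightarrow> real^'n^'n) \<Rightarrow> real^'m \<Rightarrow> real^'n^'n" where
  "eta Delta t = (\<chi> k l. if k = l then exp (tdot Delta t $ k $ k) else 0)"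

definition gmul :: "('m \<Rightarrow> real^'n^'n) \<Rightarrow> ((real^'n) \<times> (real^'m)) \<Rightarrow> ((real^'n) \<times> (real^'m)) \<Rightarrow> ((real^'n) \<times> (real^'m))" where
  "gmul Delta g h = (fst g + eta Delta (snd g) *v fst h, snd g + snd h)"

definition ginv :: "('m \<Rightarrow> real^'n^'n) \<Rightarrow> ((real^'n) \<times> (real^'m)) \<Rightarrow> ((real^'n) \<times> (real^'m))" where
  "ginv Delta g = (- (eta Delta (- snd g) *v fst g), - snd g)"

definition int_vecs :: "(real^'k) set" where
  "int_vecs = {v. \<forall>i. v $ i \<in> \<int>}"

definition SL_int :: "(real^'n^'n) set" where
  "SL_int = {A. (\<forall>i j. A $ i $ j \<in> \<int>) \<and> det A = 1}"

definition G_compatible :: "('m \<Rightarrow> real^'n^'n) \<Rightarrow> real^'n^'n \<Rightarrow> real^'m^'m \<Rightarrow> bool" where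
  "G_compatible Delta \<sigma> \<rho> \<longleftrightarrow> invertible \<sigma> \<and> invertible \<rho> \<and>
     (\<forall>j. \<sigma> ** eta Delta (column j \<rho>) ** matrix_inv \<sigma> \<in> SL_int)"

definition Lsr :: "real^'n^'n \<Rightarrow> real^'m^'m \<Rightarrow> ((real^'n) \<times> (real^'m)) set" where
  "Lsr \<sigma> \<rho> = {(matrix_inv \<sigma> *v v, \<rho> *v p) | v p. v \<in> int_vecs \<and> p \<in> int_vecs}"

text \<open>Here G (as a manifold R^n x R^m) carries Lebesgue measure, which is a (bi-invariant)
  Haar measure since all Delta_i are traceless; finite covolume is expressed by the existence of
  a Borel set of finite Haar measure whose right L-translates cover G.\<close>
definition is_subgroup :: "('m \<Rightarrow> real^'n^'n) \<Rightarrow> ((real^'n) \<times> (real^'m)) set \<Rightarrow> bool" where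
  "is_subgroup Delta L \<longleftrightarrow> (0, 0) \<in> L \<and> (\<forall>g\<in>L. \<forall>h\<in>L. gmul Delta g h \<in> L) \<and>
     (\<forall>g\<in>L. ginv Delta g \<in> L)"

definition discrete_set :: "'a::metric_space set \<Rightarrow> bool" where
  "discrete_set L \<longleftrightarrow> (\<forall>l\<in>L. \<exists>e>0. \<forall>l'\<in>L. dist l' l < e \<longrightarrow> l' = l)"

definition cocompact_lattice :: "('m \<Rightarrow> real^'n^'n) \<Rightarrow> ((real^'n) \<times> (real^'m)) set \<Rightarrow> bool" where
  "cocompact_lattice Delta L \<longleftrightarrow> is_subgroup Delta L \<and> discrete_set L \<and>
     (\<exists>F \<in> sets lborel. emeasure lborel F < \<infinity> \<and> (\<forall>g. \<exists>f\<in>F. \<exists>l\<in>L. g = gmul Delta f l)) \<and>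
     (\<exists>K. compact K \<and> (\<forall>g. \<exists>k\<in>K. \<exists>l\<in>L. g = gmul Delta k l))"

end

theory Submission
  imports Defs
begin

(* Both factors of L are images of integer lattices under invertible linear maps, hence
   uniformly discrete, and so is L.  By G-compatibility each conjugate
   \<sigma> \<eta>(\<rho> e_j) \<sigma>^-1 lies in SL_n(Z), so \<eta>(\<rho> e_j) and its inverse map
   \<sigma>^-1 Z^n into itself; the parameters t for which \<eta>(t) does so form an
   additive monoid, hence contain \<rho> Z^m, and L is a subgroup.
   Splitting t = \<rho>(b + p) and \<sigma> \<eta>(-\<rho> b) x = a + v into fractional parts a, b
   and integer parts v, p writes every (x, t) as k l with l \<in> L and k in the continuous
   image of [0,1]^n \<times> [0,1]^m under (a, b) \<mapsto> (\<eta>(\<rho> b) \<sigma>^-1 a, \<rho> b); compact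
   sets have finite Lebesgue measure.
   Only G-compatibility is needed: the remaining hypotheses on \<Delta> serve in the paper to
   make Lebesgue measure a Haar measure on G, which the definition of a lattice takes
   for granted. *)

lemma matrix_inv_right:
  fixes A :: "'a::semiring_1^'n^'n"
  assumes "invertible A"
  shows "A ** matrix_inv A = mat 1"
  using someI_ex[OF assms[unfolded invertible_def]] unfolding matrix_inv_def by blast

lemma matrix_inv_left:
  fixes A :: "'a::semiring_1^'n^'n"
  assumes "invertible A"
  shows "matrix_inv A ** A = mat 1"
  using someI_ex[OF assms[unfolded invertible_def]] unfolding matrix_inv_def by blast

lemma matrix_inv_cancel:
  fixes A :: "'a::comm_semiring_1^'n^'n"
  assumes "invertible A"
  shows "A *v (matrix_inv A *v x) = x" "matrix_inv A *v (A *v x) = x"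
  by (simp_all add: matrix_vector_mul_assoc matrix_inv_left matrix_inv_right assms)

lemma eta_mult_vec: "eta D t *v y = (\<chi> k. exp (\<Sum>i\<in>UNIV. t $ i * D i $ k $ k) * y $ k)"
  unfolding eta_def tdot_def matrix_vector_mult_def
  by (simp add: vec_eq_iff sum_component if_distrib[where f="\<lambda>z. z * _"] cong: if_cong)

lemma eta_zero_mult: "eta D 0 *v y = y"
  by (simp add: eta_mult_vec vec_eq_iff)

lemma eta_add_mult: "eta D (t + s) *v y = eta D t *v (eta D s *v y)"
  by (simp add: eta_mult_vec vec_eq_iff distrib_right sum.distrib exp_add)

lemma eta_uminus_cancel:
  "eta D t *v (eta D (- t) *v y) = y" "eta D (- t) *v (eta D t *v y) = y"
  by (simp_all add: eta_add_mult[symmetric] eta_zero_mult)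

lemma continuous_on_eta_mult [continuous_intros]:
  "continuous_on S t \<Longrightarrow> continuous_on S y \<Longrightarrow> continuous_on S (\<lambda>z. eta D (t z) *v y z)"
  unfolding eta_mult_vec by (intro continuous_intros)

lemma continuous_on_matrix_vector_mult [continuous_intros]:
  fixes A :: "real^'k^'l"
  shows "continuous_on S g \<Longrightarrow> continuous_on S (\<lambda>z. A *v g z)"
  by (rule bounded_linear.continuous_on[OF matrix_vector_mul_bounded_linear])

lemma int_vecs_zero: "0 \<in> int_vecs"
  and int_vecs_add: "v \<in> int_vecs \<Longrightarrow> w \<in> int_vecs \<Longrightarrow> v + w \<in> int_vecs"
  and int_vecs_diff: "v \<in> int_vecs \<Longrightarrow> w \<in> int_vecs \<Longrightarrow> v - w \<in> int_vecs"
  and int_vecs_uminus: "v \<in> int_vecs \<Longrightarrow> - v \<in> int_vecs"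
  unfolding int_vecs_def by auto

lemma int_vecs_norm_ge_1:
  fixes v :: "real^'k"
  assumes "v \<in> int_vecs" "v \<noteq> 0"
  shows "1 \<le> norm v"
proof -
  obtain i where "v $ i \<noteq> 0" using assms(2) by (metis vec_eq_iff zero_index)
  then have "1 \<le> \<bar>v $ i\<bar>" using assms(1) unfolding int_vecs_def by (simp add: Ints_nonzero_abs_ge1)
  then show ?thesis using component_le_norm_cart[of v i] by linarith
qed

lemma int_vecs_unit_cube_decomp:
  fixes z :: "real^'k"
  obtains v a where "v \<in> int_vecs" "a \<in> cbox 0 1" "z = a + v"
proof
  show "(\<chi> i. of_int \<lfloor>z $ i\<rfloor>) \<in> int_vecs" unfolding int_vecs_def by simp
  show "z - (\<chi> i. of_int \<lfloor>z $ i\<rfloor>) \<in> cbox 0 1"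
    unfolding mem_box_cart by (auto simp: of_int_floor_le) linarith
qed simp

lemma int_matrix_mult_int_vecs:
  fixes A :: "real^'k^'l"
  assumes "\<forall>i j. A $ i $ j \<in> \<int>" "v \<in> int_vecs"
  shows "A *v v \<in> int_vecs"
  using assms unfolding int_vecs_def matrix_vector_mult_def by (auto intro!: Ints_sum)

lemma det_int_matrix_Ints:
  fixes A :: "real^'n^'n"
  assumes "\<forall>i j. A $ i $ j \<in> \<int>"
  shows "det A \<in> \<int>"
  unfolding det_def using assms by (intro Ints_sum Ints_mult Ints_prod) auto

lemma SL_int_mult_int_vecs_iff:
  fixes A :: "real^'n^'n"
  assumes "A \<in> SL_int"
  shows "A *v y \<in> int_vecs \<longleftrightarrow> y \<in> int_vecs"
proof -
  have A_int: "\<forall>i j. A $ i $ j \<in> \<int>" and det_A: "det A = 1"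
    using assms unfolding SL_int_def by auto
  show ?thesis
  proof
    assume Ay: "A *v y \<in> int_vecs"
    have "y $ k = det (\<chi> i j. if j = k then (A *v y) $ i else A $ i $ j)" for k
      using cramer_lemma[where A=A and k=k and x=y] det_A by (simp only: mult_1_right)
    moreover have "det (\<chi> i j. if j = k then (A *v y) $ i else A $ i $ j) \<in> \<int>" for k
      using A_int Ay unfolding int_vecs_def by (intro det_int_matrix_Ints) auto
    ultimately show "y \<in> int_vecs" unfolding int_vecs_def by simp
  qed (use int_matrix_mult_int_vecs A_int in blast)
qed

lemma Ints_scaleR_mem:
  fixes S :: "'a::real_vector set"
  assumes "0 \<in> S" "\<And>a b. a \<in> S \<Longrightarrow> b \<in> S \<Longrightarrow> a + b \<in> S" "c \<in> S" "- c \<in> S" "k \<in> \<int>"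
  shows "k *\<^sub>R c \<in> S"
proof -
  have nat_mult: "real n *\<^sub>R d \<in> S" if "d \<in> S" for n d
    by (induction n) (use assms(1,2) that in \<open>simp_all add: scaleR_add_left\<close>)
  from \<open>k \<in> \<int>\<close> obtain z where "k = of_int z" by (auto elim: Ints_cases)
  then consider "k = real (nat z)" | "k = - real (nat (- z))" by linarith
  then show ?thesis using nat_mult assms(3,4) by cases (metis, metis scaleR_minus_left scaleR_minus_right)
qed

lemma Ints_combination_mem:
  fixes S :: "'a::real_vector set"
  assumes "0 \<in> S" "\<And>a b. a \<in> S \<Longrightarrow> b \<in> S \<Longrightarrow> a + b \<in> S"
    and "\<And>j. c j \<in> S" "\<And>j. - c j \<in> S" "\<And>j. p j \<in> \<int>"
  shows "(\<Sum>j\<in>J. p j *\<^sub>R c j) \<in> S"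
proof (induction J rule: infinite_finite_induct)
  case (insert j J)
  then show ?case using assms Ints_scaleR_mem[of S "c j" "p j"] by simp
qed (use assms(1) in simp_all)

lemma uniform_discrete_Times:
  assumes "uniform_discrete A" "uniform_discrete B"
  shows "uniform_discrete (A \<times> B)"
proof -
  obtain e1 where "e1 > 0" and A: "\<And>x y. x \<in> A \<Longrightarrow> y \<in> A \<Longrightarrow> dist x y < e1 \<Longrightarrow> x = y"
    using assms(1) unfolding uniform_discrete_def by metis
  obtain e2 where "e2 > 0" and B: "\<And>x y. x \<in> B \<Longrightarrow> y \<in> B \<Longrightarrow> dist x y < e2 \<Longrightarrow> x = y"
    using assms(2) unfolding uniform_discrete_def by metis
  show ?thesis
  proof (rule uniformI1)
    show "min e1 e2 > 0" using \<open>e1 > 0\<close> \<open>e2 > 0\<close> by simp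
    fix x y assume xy: "x \<in> A \<times> B" "y \<in> A \<times> B" "dist x y < min e1 e2"
    have "fst x = fst y"
      using xy dist_fst_le[of x y] by (intro A) (auto simp: mem_Times_iff)
    moreover have "snd x = snd y"
      using xy dist_snd_le[of x y] by (intro B) (auto simp: mem_Times_iff)
    ultimately show "x = y" by (rule prod_eqI)
  qed
qed

lemma uniform_discrete_int_vecs_image:
  fixes A :: "real^'k^'l" and B :: "real^'l^'k"
  assumes "B ** A = mat 1"
  shows "uniform_discrete ((*v) A ` int_vecs)"
proof -
  obtain C where "C > 0" and C: "\<And>y. norm (B *v y) \<le> C * norm y"
    using linear_bounded_pos[OF matrix_vector_mul_linear[of B]] by blast
  show ?thesis
  proof (rule uniformI2)
    show "1 / C > 0" using \<open>C > 0\<close> by simp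
    fix x y assume "x \<in> (*v) A ` int_vecs" "y \<in> (*v) A ` int_vecs" "x \<noteq> y"
    then obtain v w where vw: "v \<in> int_vecs" "w \<in> int_vecs" "x = A *v v" "y = A *v w" "v \<noteq> w"
      by auto
    have "v - w = B *v (x - y)"
      using vw(3,4) by (simp add: matrix_vector_mult_diff_distrib matrix_vector_mul_assoc assms)
    moreover have "1 \<le> norm (v - w)"
      using int_vecs_norm_ge_1[OF int_vecs_diff[OF vw(1,2)]] vw(5) by simp
    ultimately have "1 \<le> C * dist x y"
      using C[of "x - y"] by (simp add: dist_norm)
    then show "1 / C \<le> dist x y" using \<open>C > 0\<close> by (simp add: field_simps)
  qed
qed

lemma discrete_set_if_uniform_discrete: "uniform_discrete L \<Longrightarrow> discrete_set L"
  unfolding uniform_discrete_def discrete_set_def by (metis dist_commute)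

lemma Lsr_eq_Times: "Lsr \<sigma> \<rho> = ((*v) (matrix_inv \<sigma>) ` int_vecs) \<times> ((*v) \<rho> ` int_vecs)"
  unfolding Lsr_def by blast

lemma mem_Lsr_iff:
  fixes \<sigma> :: "real^'n::finite^'n" and \<rho> :: "real^'m::finite^'m"
  assumes "invertible \<sigma>"
  shows "g \<in> Lsr \<sigma> \<rho> \<longleftrightarrow> \<sigma> *v fst g \<in> int_vecs \<and> (\<exists>p\<in>int_vecs. snd g = \<rho> *v p)"
  unfolding Lsr_eq_Times mem_Times_iff image_iff
  by (metis matrix_inv_cancel[OF assms])

lemma conjugate_SL_int_mult_iff:
  fixes \<sigma> M :: "real^'n::finite^'n"
  assumes "invertible \<sigma>" "\<sigma> ** M ** matrix_inv \<sigma> \<in> SL_int"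
  shows "\<sigma> *v (M *v x) \<in> int_vecs \<longleftrightarrow> \<sigma> *v x \<in> int_vecs"
proof -
  have "\<sigma> *v (M *v x) = (\<sigma> ** M ** matrix_inv \<sigma>) *v (\<sigma> *v x)"
    by (simp add: matrix_vector_mul_assoc[symmetric] matrix_inv_cancel[OF assms(1)])
  then show ?thesis using SL_int_mult_int_vecs_iff[OF assms(2)] by simp
qed

lemma G_compatible_eta_preserves_lattice:
  assumes "G_compatible D \<sigma> \<rho>" "p \<in> int_vecs" "\<sigma> *v x \<in> int_vecs"
  shows "\<sigma> *v (eta D (\<rho> *v p) *v x) \<in> int_vecs"
proof -
  define S where "S = {t. \<forall>x. \<sigma> *v x \<in> int_vecs \<longrightarrow> \<sigma> *v (eta D t *v x) \<in> int_vecs}"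
  have inv: "invertible \<sigma>" and SL: "\<And>j. \<sigma> ** eta D (column j \<rho>) ** matrix_inv \<sigma> \<in> SL_int"
    using assms(1) unfolding G_compatible_def by auto
  note column_iff = conjugate_SL_int_mult_iff[OF inv SL]
  have "column j \<rho> \<in> S" for j
    unfolding S_def using column_iff by blast
  moreover have "- column j \<rho> \<in> S" for j
    unfolding S_def using column_iff[of j "eta D (- column j \<rho>) *v _"] by (simp add: eta_uminus_cancel)
  moreover have "0 \<in> S" unfolding S_def by (simp add: eta_zero_mult)
  moreover have "a + b \<in> S" if "a \<in> S" "b \<in> S" for a b
    using that unfolding S_def by (simp add: eta_add_mult)
  ultimately have "(\<Sum>j\<in>UNIV. p $ j *\<^sub>R column j \<rho>) \<in> S"
    using assms(2) unfolding int_vecs_def by (intro Ints_combination_mem) auto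
  then have "\<rho> *v p \<in> S" by (simp add: matrix_mult_sum scalar_mult_eq_scaleR)
  then show ?thesis using assms(3) unfolding S_def by blast
qed

lemma G_compatible_subgroup:
  fixes D :: "'m::finite \<Rightarrow> real^'n::finite^'n"
  assumes "G_compatible D \<sigma> \<rho>"
  shows "is_subgroup D (Lsr \<sigma> \<rho>)"
proof -
  have "invertible \<sigma>" using assms unfolding G_compatible_def by auto
  note mem = mem_Lsr_iff[OF this]
  have "gmul D g h \<in> Lsr \<sigma> \<rho>" if gh: "g \<in> Lsr \<sigma> \<rho>" "h \<in> Lsr \<sigma> \<rho>" for g h
  proof -
    obtain p q where p: "p \<in> int_vecs" "snd g = \<rho> *v p" and q: "q \<in> int_vecs" "snd h = \<rho> *v q"
      and x: "\<sigma> *v fst g \<in> int_vecs" and y: "\<sigma> *v fst h \<in> int_vecs"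
      using gh unfolding mem by blast
    have "\<sigma> *v fst (gmul D g h) = \<sigma> *v fst g + \<sigma> *v (eta D (\<rho> *v p) *v fst h)"
      by (simp add: gmul_def p matrix_vector_right_distrib)
    moreover have "snd (gmul D g h) = \<rho> *v (p + q)"
      by (simp add: gmul_def p q matrix_vector_right_distrib)
    ultimately show ?thesis
      unfolding mem
      using int_vecs_add[OF x G_compatible_eta_preserves_lattice[OF assms p(1) y]]
        int_vecs_add[OF p(1) q(1)]
      by auto
  qed
  moreover have "ginv D g \<in> Lsr \<sigma> \<rho>" if g: "g \<in> Lsr \<sigma> \<rho>" for g
  proof -
    obtain p where p: "p \<in> int_vecs" "snd g = \<rho> *v p" and x: "\<sigma> *v fst g \<in> int_vecs"
      using g unfolding mem by blast
    have "\<sigma> *v fst (ginv D g) = - (\<sigma> *v (eta D (\<rho> *v (- p)) *v fst g))"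
      by (simp add: ginv_def p vec.neg)
    moreover have "snd (ginv D g) = \<rho> *v (- p)"
      by (simp add: ginv_def p vec.neg)
    ultimately show ?thesis
      unfolding mem
      using int_vecs_uminus[OF G_compatible_eta_preserves_lattice[OF assms int_vecs_uminus[OF p(1)] x]]
        int_vecs_uminus[OF p(1)]
      by auto
  qed
  moreover have "(0, 0) \<in> Lsr \<sigma> \<rho>"
    unfolding mem by (auto simp: int_vecs_zero matrix_vector_mult_0_right intro!: bexI[of _ 0])
  ultimately show ?thesis unfolding is_subgroup_def by blast
qed

lemma Lsr_discrete:
  assumes "invertible \<sigma>" "invertible \<rho>"
  shows "discrete_set (Lsr \<sigma> \<rho>)"
  unfolding Lsr_eq_Times
  by (intro discrete_set_if_uniform_discrete uniform_discrete_Times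
      uniform_discrete_int_vecs_image[OF matrix_inv_right[OF assms(1)]]
      uniform_discrete_int_vecs_image[OF matrix_inv_left[OF assms(2)]])

lemma Lsr_cocompact:
  fixes \<sigma> :: "real^'n::finite^'n" and \<rho> :: "real^'m::finite^'m"
  assumes "invertible \<sigma>" "invertible \<rho>"
  obtains K where "compact K" "\<And>g. \<exists>k\<in>K. \<exists>l\<in>Lsr \<sigma> \<rho>. g = gmul D k l"
proof
  define f where "f = (\<lambda>(a, b). (eta D (\<rho> *v b) *v (matrix_inv \<sigma> *v a), \<rho> *v b))"
  have "continuous_on UNIV f"
    unfolding f_def case_prod_beta by (intro continuous_intros)
  then show "compact (f ` (cbox 0 1 \<times> cbox 0 1))"
    by (intro compact_continuous_image compact_Times compact_cbox) (auto intro: continuous_on_subset)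
  fix g :: "(real^'n) \<times> (real^'m)"
  obtain x t where g: "g = (x, t)" by fastforce
  obtain p b where pb: "p \<in> int_vecs" "b \<in> cbox 0 1" "matrix_inv \<rho> *v t = b + p"
    using int_vecs_unit_cube_decomp by blast
  define s where "s = \<rho> *v b"
  obtain v a where va: "v \<in> int_vecs" "a \<in> cbox 0 1" "\<sigma> *v (eta D (- s) *v x) = a + v"
    using int_vecs_unit_cube_decomp by blast
  have "t = s + \<rho> *v p"
    using arg_cong[OF pb(3), of "(*v) \<rho>"]
    by (simp add: s_def matrix_inv_cancel[OF assms(2)] matrix_vector_right_distrib)
  moreover have "x = eta D s *v (matrix_inv \<sigma> *v a) + eta D s *v (matrix_inv \<sigma> *v v)"
    using arg_cong[OF va(3), of "\<lambda>z. eta D s *v (matrix_inv \<sigma> *v z)"]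
    by (simp add: matrix_inv_cancel[OF assms(1)] eta_uminus_cancel matrix_vector_right_distrib)
  ultimately have "g = gmul D (f (a, b)) (matrix_inv \<sigma> *v v, \<rho> *v p)"
    by (simp add: g gmul_def f_def s_def)
  moreover have "(matrix_inv \<sigma> *v v, \<rho> *v p) \<in> Lsr \<sigma> \<rho>"
    using va(1) pb(1) unfolding Lsr_def by blast
  ultimately show "\<exists>k\<in>f ` (cbox 0 1 \<times> cbox 0 1). \<exists>l\<in>Lsr \<sigma> \<rho>. g = gmul D k l"
    using va(2) pb(2) by blast
qed

theorem mainTheorem1:
  fixes Delta :: "'m::finite \<Rightarrow> real^'n::finite^'n"
    and \<sigma> :: "real^'n^'n" and \<rho> :: "real^'m^'m"
  assumes "CARD('m) \<le> CARD('n)"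
    and "\<forall>c. (\<Sum>i\<in>UNIV. c i *\<^sub>R Delta i) = 0 \<longrightarrow> (\<forall>i. c i = 0)"
    and "\<forall>i. is_diag (Delta i)"
    and "\<forall>i. invertible (Delta i)"
    and "\<forall>i. trace (Delta i) = 0"
    and "\<forall>i k l. k \<noteq> l \<longrightarrow> Delta i $ k $ k \<noteq> Delta i $ l $ l"
    and "G_compatible Delta \<sigma> \<rho>"
  shows "cocompact_lattice Delta (Lsr \<sigma> \<rho>)"
proof -
  have inv: "invertible \<sigma>" "invertible \<rho>" using assms(7) unfolding G_compatible_def by auto
  obtain K where K: "compact K" "\<forall>g. \<exists>k\<in>K. \<exists>l\<in>Lsr \<sigma> \<rho>. g = gmul Delta k l"
    using Lsr_cocompact[OF inv] by metis
  have "K \<in> sets lborel" "emeasure lborel K < \<infinity>"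
    using K(1) borel_compact emeasure_compact_finite by auto
  then show ?thesis unfolding cocompact_lattice_def
    using G_compatible_subgroup[OF assms(7)] Lsr_discrete[OF inv] K by blast
qed

end
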